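(* Let $\mathcal{S}$ be an $E$-unitary inverse semigroupoid, let $\theta$ be the Munn action of $\mathcal{S}$ on $E(\mathcal{S})$, and let $\alpha$ be the induced ordered partial action of $\mathcal{S}/\sigma$ on $E(\mathcal{S})$. Then the map $\phi:\mathcal{S}\to\mathcal{S}/\sigma\ltimes_\alpha E(\mathcal{S})$, $\phi(s)=(\pi_\sigma(s),s^*s)$, is an isomorphism of semigroupoids; in particular $\mathcal{S}\cong\mathcal{S}/\sigma\ltimes_\alpha E(\mathcal{S})$.
   Context: Inverse semigroupoid: arrows $\mathcal{S}$, objects $\mathcal{S}^{(0)}$, maps $d,c$, associative multiplication on $\mathcal{S}^{(2)}=\{(s,t):d(s)=c(t)\}$ with $d(st)=d(t)$, $c(st)=c(s)$, unique $s^*$ with $ss^*s=s$, $s^*ss^*=s^*$; $E(\mathcal{S})$ = idempotents (a semilatticeoid: idempotents over the same object commute and their product is their meet), ordered by the natural order: for parallel $s,t$, $s\leqslant t$ iff $s=te$ for an idempotent $e$ with $(t,e)\in\mathcal{S}^{(2)}$. $(s,t)\in\sigma$ iff some $r\leqslant s,t$; $\mathcal{S}/\sigma$ is the groupoid of $\sigma$-classes $\pi_\sigma(s)$ with $d(\pi_\sigma(s))=d(s)$, $c(\pi_\sigma(s))=c(s)$, $\pi_\sigma(s)\pi_\sigma(t)=\pi_\sigma(st)$, $\pi_\sigma(s)^*=\pi_\sigma(s^* )$. $E$-unitary: $(s,e)\in\sigma$, $e$ idempotent imply $s$ idempotent. A morphism of semigroupoids $\varphi$ maps composable pairs to composable pairs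 with $\varphi(st)=\varphi(s)\varphi(t)$; an isomorphism is a bijective morphism whose inverse is a morphism. Munn action: $X_s=\{e\in E(\mathcal{S}):e\leqslant ss^*\}$, $\theta_s:X_{s^*}\to X_s$, $\theta_s(e)=ses^*$. Induced action of $\mathcal{S}/\sigma$: $D_{\pi_\sigma(s)}=\bigcup_{t:(s,t)\in\sigma}X_t$ and $\alpha_{\pi_\sigma(s)}:D_{\pi_\sigma(s^* )}\to D_{\pi_\sigma(s)}$, $\alpha_{\pi_\sigma(s)}(e)=\theta_t(e)$ for any $t$ with $(s,t)\in\sigma$ and $e\in X_{t^*}$. Semidirect product of a groupoid $\mathcal{G}$ acting partially by $\alpha=(\{D_g\},\{\alpha_g\})$ on a semilatticeoid $Y$: $\mathcal{G}\ltimes_\alpha Y=\{(g,y): y\in D_{g^*}\}$, objects $\mathcal{G}^{(0)}\times Y^{(0)}$, $d(g,y)=(d(g),d(y))$, $c(g,y)=(c(g),c(\alpha_g(y)))$, product $(g,x)(h,y)=(gh,\alpha_{h^*}(x\,\alpha_h(y)))$ defined when $(g,h)$ composable and $(x,\alpha_h(y))\in Y^{(2)}$ (i.e. over the same object). *)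

theory Defs
  imports Main
begin

record ('a, 'o) sgpd =
  sarr :: "'a set"
  sobj :: "'o set"
  sdom :: "'a \<Rightarrow> 'o"
  scod :: "'a \<Rightarrow> 'o"
  smul :: "'a \<Rightarrow> 'a \<Rightarrow> 'a"

definition composable :: "('a, 'o, 'b) sgpd_scheme \<Rightarrow> 'a \<Rightarrow> 'a \<Rightarrow> bool" where
  "composable S s t \<longleftrightarrow> s \<in> sarr S \<and> t \<in> sarr S \<and> sdom S s = scod S t"

definition semigroupoid :: "('a, 'o, 'b) sgpd_scheme \<Rightarrow> bool" where
  "semigroupoid S \<longleftrightarrow>
     (\<forall>s\<in>sarr S. sdom S s \<in> sobj S \<and> scod S s \<in> sobj S) \<and>
     (\<forall>s t. composable S s t \<longrightarrow>
        smul S s t \<in> sarr S \<and> sdom S (smul S s t) = sdom S t \<and> scod S (smul S s t) = scod S s) \<and>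
     (\<forall>s t u. composable S s t \<and> composable S t u \<longrightarrow>
        smul S (smul S s t) u = smul S s (smul S t u))"

definition is_inv :: "('a, 'o, 'b) sgpd_scheme \<Rightarrow> 'a \<Rightarrow> 'a \<Rightarrow> bool" where
  "is_inv S s t \<longleftrightarrow> t \<in> sarr S \<and> sdom S s = scod S t \<and> sdom S t = scod S s \<and>
     smul S (smul S s t) s = s \<and> smul S (smul S t s) t = t"

definition inverse_semigroupoid :: "('a, 'o, 'b) sgpd_scheme \<Rightarrow> bool" where
  "inverse_semigroupoid S \<longleftrightarrow> semigroupoid S \<and> (\<forall>s\<in>sarr S. \<exists>!t. is_inv S s t)"

definition star :: "('a, 'o, 'b) sgpd_scheme \<Rightarrow> 'a \<Rightarrow> 'a" where
  "star S s = (THE t. is_inv S s t)"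

definition idems :: "('a, 'o, 'b) sgpd_scheme \<Rightarrow> 'a set" where
  "idems S = {e \<in> sarr S. sdom S e = scod S e \<and> smul S e e = e}"

definition nleq :: "('a, 'o, 'b) sgpd_scheme \<Rightarrow> 'a \<Rightarrow> 'a \<Rightarrow> bool" where
  "nleq S s t \<longleftrightarrow> s \<in> sarr S \<and> t \<in> sarr S \<and> sdom S s = sdom S t \<and> scod S s = scod S t \<and>
     (\<exists>e\<in>idems S. sdom S t = scod S e \<and> s = smul S t e)"

definition sigma_rel :: "('a, 'o, 'b) sgpd_scheme \<Rightarrow> 'a \<Rightarrow> 'a \<Rightarrow> bool" where
  "sigma_rel S s t \<longleftrightarrow> (\<exists>r. nleq S r s \<and> nleq S r t)"

definition E_unitary :: "('a, 'o, 'b) sgpd_scheme \<Rightarrow> bool" where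
  "E_unitary S \<longleftrightarrow>
     (\<forall>s e. s \<in> sarr S \<and> e \<in> idems S \<and> sigma_rel S s e \<longrightarrow> s \<in> idems S)"

definition pi_sigma :: "('a, 'o, 'b) sgpd_scheme \<Rightarrow> 'a \<Rightarrow> 'a set" where
  "pi_sigma S s = {t \<in> sarr S. sigma_rel S s t}"

definition rep :: "'a set \<Rightarrow> 'a" where
  "rep g = (SOME s. s \<in> g)"

definition sigma_quot :: "('a, 'o, 'b) sgpd_scheme \<Rightarrow> ('a set, 'o) sgpd" where
  "sigma_quot S =
     \<lparr> sarr = pi_sigma S ` sarr S,
       sobj = sobj S,
       sdom = (\<lambda>g. sdom S (rep g)),
       scod = (\<lambda>g. scod S (rep g)),
       smul = (\<lambda>g h. pi_sigma S (smul S (rep g) (rep h))) \<rparr>"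

definition idem_sgpd :: "('a, 'o, 'b) sgpd_scheme \<Rightarrow> ('a, 'o) sgpd" where
  "idem_sgpd S = \<lparr> sarr = idems S, sobj = sobj S, sdom = sdom S, scod = scod S, smul = smul S \<rparr>"

definition munn_X :: "('a, 'o, 'b) sgpd_scheme \<Rightarrow> 'a \<Rightarrow> 'a set" where
  "munn_X S s = {e \<in> idems S. nleq S e (smul S s (star S s))}"

definition munn_theta :: "('a, 'o, 'b) sgpd_scheme \<Rightarrow> 'a \<Rightarrow> 'a \<Rightarrow> 'a" where
  "munn_theta S s e = smul S (smul S s e) (star S s)"

definition ind_D :: "('a, 'o, 'b) sgpd_scheme \<Rightarrow> 'a set \<Rightarrow> 'a set" where
  "ind_D S g = (\<Union>t\<in>g. munn_X S t)"

definition ind_alpha :: "('a, 'o, 'b) sgpd_scheme \<Rightarrow> 'a set \<Rightarrow> 'a \<Rightarrow> 'a" where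
  "ind_alpha S g e = munn_theta S (SOME t. t \<in> g \<and> e \<in> munn_X S (star S t)) e"

definition semidirect ::
  "('g, 'o, 'b) sgpd_scheme \<Rightarrow> ('y, 'p, 'c) sgpd_scheme \<Rightarrow> ('g \<Rightarrow> 'y set) \<Rightarrow> ('g \<Rightarrow> 'y \<Rightarrow> 'y)
     \<Rightarrow> ('g \<times> 'y, 'o \<times> 'p) sgpd" where
  "semidirect G Y D \<alpha> =
     \<lparr> sarr = {(g, y). g \<in> sarr G \<and> y \<in> D (star G g)},
       sobj = sobj G \<times> sobj Y,
       sdom = (\<lambda>(g, y). (sdom G g, sdom Y y)),
       scod = (\<lambda>(g, y). (scod G g, scod Y (\<alpha> g y))),
       smul = (\<lambda>(g, x) (h, y). (smul G g h, \<alpha> (star G h) (smul Y x (\<alpha> h y)))) \<rparr>"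

definition sgpd_morphism ::
  "('a, 'o, 'b) sgpd_scheme \<Rightarrow> ('c, 'p, 'd) sgpd_scheme \<Rightarrow> ('a \<Rightarrow> 'c) \<Rightarrow> bool" where
  "sgpd_morphism S T f \<longleftrightarrow> (\<forall>s\<in>sarr S. f s \<in> sarr T) \<and>
     (\<forall>s t. composable S s t \<longrightarrow>
        composable T (f s) (f t) \<and> f (smul S s t) = smul T (f s) (f t))"

definition sgpd_iso ::
  "('a, 'o, 'b) sgpd_scheme \<Rightarrow> ('c, 'p, 'd) sgpd_scheme \<Rightarrow> ('a \<Rightarrow> 'c) \<Rightarrow> bool" where
  "sgpd_iso S T f \<longleftrightarrow> sgpd_morphism S T f \<and> bij_betw f (sarr S) (sarr T) \<and>
     sgpd_morphism T S (the_inv_into (sarr S) f)"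

end

theory Submission
  imports Defs
begin

text \<open>E-unitarity makes \<open>s t\<^sup>*\<close> idempotent whenever \<open>s \<sigma> t\<close>; consequently \<open>s\<close> lies below \<open>t\<close>
  in the natural order as soon as \<open>s\<^sup>* s = t\<^sup>* t\<close>, and by antisymmetry a \<open>\<sigma>\<close>-class together with
  a domain idempotent determines at most one arrow. This gives injectivity of
  \<open>\<phi> s = (\<pi>\<^sub>\<sigma> s, s\<^sup>* s)\<close>, and for the same reason the induced action agrees with the Munn
  action \<open>\<theta>\<^sub>u\<close> on \<open>X\<^bsub>u\<^sup>*\<^esub>\<close> whichever representative \<open>u\<close> of the class is used.
  Multiplicativity of \<open>\<phi>\<close> then amounts to \<open>\<theta>\<^bsub>t\<^sup>*\<^esub>(s\<^sup>* s t t\<^sup>*) = (s t)\<^sup>* (s t)\<close>, and a pair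
  \<open>(\<pi>\<^sub>\<sigma> s, e)\<close> with \<open>e \<le> u u\<^sup>*\<close>, \<open>u \<sigma> s\<^sup>*\<close>, is the image of \<open>u\<^sup>* e\<close>.\<close>

lemma semidirect_arr:
  "(g, y) \<in> sarr (semidirect G Y D \<alpha>) \<longleftrightarrow> g \<in> sarr G \<and> y \<in> D (star G g)"
  by (simp add: semidirect_def)

lemma semidirect_dom: "sdom (semidirect G Y D \<alpha>) (g, y) = (sdom G g, sdom Y y)"
  by (simp add: semidirect_def)

lemma semidirect_cod: "scod (semidirect G Y D \<alpha>) (g, y) = (scod G g, scod Y (\<alpha> g y))"
  by (simp add: semidirect_def)

lemma semidirect_mul:
  "smul (semidirect G Y D \<alpha>) (g, x) (h, y) = (smul G g h, \<alpha> (star G h) (smul Y x (\<alpha> h y)))"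
  by (simp add: semidirect_def)

lemma idem_sgpd_simps [simp]:
  "sdom (idem_sgpd S) = sdom S" "scod (idem_sgpd S) = scod S" "smul (idem_sgpd S) = smul S"
  by (simp_all add: idem_sgpd_def)

lemma sgpd_isoI:
  assumes S: "semigroupoid S" and mor: "sgpd_morphism S T f" and bij: "bij_betw f (sarr S) (sarr T)"
    and reflect: "\<And>s t. s \<in> sarr S \<Longrightarrow> t \<in> sarr S \<Longrightarrow> composable T (f s) (f t) \<Longrightarrow> composable S s t"
  shows "sgpd_iso S T f"
proof -
  let ?g = "the_inv_into (sarr S) f"
  have inj: "inj_on f (sarr S)" and img: "f ` sarr S = sarr T"
    using bij by (auto simp: bij_betw_def)
  have "sgpd_morphism T S ?g"
    unfolding sgpd_morphism_def
  proof (intro conjI allI impI ballI)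
    fix p assume "p \<in> sarr T"
    then show "?g p \<in> sarr S" using the_inv_into_into[OF inj] img by blast
  next
    fix p q assume pq: "composable T p q"
    then have "p \<in> f ` sarr S" "q \<in> f ` sarr S" using img by (auto simp: composable_def)
    then obtain s t where st: "s \<in> sarr S" "t \<in> sarr S" "p = f s" "q = f t" by blast
    then have "composable S s t" using reflect pq by blast
    moreover have "?g p = s" "?g q = t" using st the_inv_into_f_f[OF inj] by auto
    moreover have "?g (smul T p q) = smul S s t"
    proof -
      have "smul S s t \<in> sarr S" using S \<open>composable S s t\<close> by (simp add: semigroupoid_def)
      moreover have "smul T p q = f (smul S s t)"
        using mor \<open>composable S s t\<close> st by (simp add: sgpd_morphism_def)
      ultimately show ?thesis using the_inv_into_f_f[OF inj] by simp
    qed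
    ultimately show "composable S (?g p) (?g q)" "?g (smul T p q) = smul S (?g p) (?g q)"
      by simp_all
  qed
  then show ?thesis using mor bij by (simp add: sgpd_iso_def)
qed

locale inverse_sgpd =
  fixes S :: "('a, 'o) sgpd"
  assumes inverse: "inverse_semigroupoid S"
begin

abbreviation "arr \<equiv> sarr S"
abbreviation "dm \<equiv> sdom S"
abbreviation "cd \<equiv> scod S"
abbreviation mul (infixr "\<cdot>" 70) where "s \<cdot> t \<equiv> smul S s t"
abbreviation sstar ("_\<^sup>\<star>" [1000] 1000) where "s\<^sup>\<star> \<equiv> star S s"
abbreviation "E \<equiv> idems S"

lemma semigroupoid: "semigroupoid S"
  using inverse by (simp add: inverse_semigroupoid_def)

lemma mul_closed [simp]: "s \<in> arr \<Longrightarrow> t \<in> arr \<Longrightarrow> dm s = cd t \<Longrightarrow> s \<cdot> t \<in> arr"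
  and dom_mul [simp]: "s \<in> arr \<Longrightarrow> t \<in> arr \<Longrightarrow> dm s = cd t \<Longrightarrow> dm (s \<cdot> t) = dm t"
  and cod_mul [simp]: "s \<in> arr \<Longrightarrow> t \<in> arr \<Longrightarrow> dm s = cd t \<Longrightarrow> cd (s \<cdot> t) = cd s"
  using semigroupoid by (auto simp: semigroupoid_def composable_def)

lemma mul_assoc [simp]:
  "s \<in> arr \<Longrightarrow> t \<in> arr \<Longrightarrow> u \<in> arr \<Longrightarrow> dm s = cd t \<Longrightarrow> dm t = cd u \<Longrightarrow> (s \<cdot> t) \<cdot> u = s \<cdot> t \<cdot> u"
  using semigroupoid by (auto simp: semigroupoid_def composable_def)

lemma is_inv_star: "s \<in> arr \<Longrightarrow> is_inv S s s\<^sup>\<star>"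
  using inverse unfolding inverse_semigroupoid_def star_def by (metis theI')

lemma star_simps [simp]:
  assumes "s \<in> arr"
  shows "s\<^sup>\<star> \<in> arr" "dm s\<^sup>\<star> = cd s" "cd s\<^sup>\<star> = dm s" "s \<cdot> s\<^sup>\<star> \<cdot> s = s" "s\<^sup>\<star> \<cdot> s \<cdot> s\<^sup>\<star> = s\<^sup>\<star>"
  using is_inv_star[OF assms] assms by (auto simp: is_inv_def)

lemma star_unique: "s \<in> arr \<Longrightarrow> is_inv S s t \<Longrightarrow> s\<^sup>\<star> = t"
  using inverse unfolding inverse_semigroupoid_def star_def by (metis the1_equality)

lemma star_eqI:
  assumes "s \<in> arr" "t \<in> arr" "dm s = cd t" "dm t = cd s" "s \<cdot> t \<cdot> s = s" "t \<cdot> s \<cdot> t = t"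
  shows "s\<^sup>\<star> = t"
  using star_unique[of s t] assms by (simp add: is_inv_def)

lemma star_star [simp]: "s \<in> arr \<Longrightarrow> s\<^sup>\<star>\<^sup>\<star> = s"
  by (metis star_eqI star_simps)

text \<open>The simplifier normalises products to the right, so the inverse laws are also needed
  in the form that applies inside a longer product.\<close>

lemma mul_star_mul_mul [simp]:
  assumes "s \<in> arr" "x \<in> arr" "cd x = dm s"
  shows "s \<cdot> s\<^sup>\<star> \<cdot> s \<cdot> x = s \<cdot> x"
proof -
  have "(s \<cdot> s\<^sup>\<star> \<cdot> s) \<cdot> x = s \<cdot> x" using assms by simp
  then show ?thesis using assms by (simp del: star_simps(4) add: star_simps(1-3))
qed

lemma star_mul_star_mul [simp]:
  assumes "s \<in> arr" "x \<in> arr" "cd x = cd s"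
  shows "s\<^sup>\<star> \<cdot> s \<cdot> s\<^sup>\<star> \<cdot> x = s\<^sup>\<star> \<cdot> x"
  using mul_star_mul_mul[of "s\<^sup>\<star>" x] assms by simp

lemma idemsD: "e \<in> E \<Longrightarrow> e \<in> arr \<and> dm e = cd e \<and> e \<cdot> e = e"
  and idemsI: "e \<in> arr \<Longrightarrow> dm e = cd e \<Longrightarrow> e \<cdot> e = e \<Longrightarrow> e \<in> E"
  by (auto simp: idems_def)

lemma idem_mul_idem_mul [simp]:
  assumes "e \<in> E" "x \<in> arr" "cd x = dm e"
  shows "e \<cdot> e \<cdot> x = e \<cdot> x"
proof -
  have e: "e \<in> arr" "dm e = cd e" "e \<cdot> e = e" using idemsD[OF assms(1)] by auto
  have "e \<cdot> e \<cdot> x = (e \<cdot> e) \<cdot> x" using e(1,2) assms by simp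
  also have "\<dots> = e \<cdot> x" using e by simp
  finally show ?thesis .
qed

lemma star_idem [simp]: "e \<in> E \<Longrightarrow> e\<^sup>\<star> = e"
  using star_eqI[of e e] idemsD[of e] by auto

lemma mul_star_in_idems: "s \<in> arr \<Longrightarrow> s \<cdot> s\<^sup>\<star> \<in> E"
  and star_mul_in_idems: "s \<in> arr \<Longrightarrow> s\<^sup>\<star> \<cdot> s \<in> E"
  by (auto intro: idemsI)

lemma idem_mul_closed:
  assumes e: "e \<in> E" and f: "f \<in> E" and ef: "dm e = dm f"
  shows "e \<cdot> f \<in> E"
proof -
  have ids: "e \<in> arr" "cd e = dm e" "e \<cdot> e = e" "f \<in> arr" "cd f = dm f" "f \<cdot> f = f" "dm e = dm f"
    using idemsD[OF e] idemsD[OF f] ef by auto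
  define x where "x = (e \<cdot> f)\<^sup>\<star>"
  have ef_arr: "e \<cdot> f \<in> arr" using ids by simp
  have x: "x \<in> arr" "dm x = dm e" "cd x = dm e" using ids by (auto simp: x_def)
  have l1: "e \<cdot> f \<cdot> x \<cdot> e \<cdot> f = e \<cdot> f"
    using star_simps(4)[OF ef_arr] ids unfolding x_def by (simp del: star_simps(4))
  have l2: "x \<cdot> e \<cdot> f \<cdot> x = x"
    using star_simps(5)[OF ef_arr] ids unfolding x_def by (simp del: star_simps(5))
  have l2': "x \<cdot> e \<cdot> f \<cdot> x \<cdot> e = x \<cdot> e"
    using arg_cong[where f="\<lambda>t. t \<cdot> e", OF l2] ids x by simp
  \<comment> \<open>\<open>f x e\<close> is an inverse of \<open>e f\<close>, hence equal to \<open>x\<close>, and that form makes \<open>x\<close> idempotent\<close>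
  have fxe: "f \<cdot> x \<cdot> e = x"
    unfolding x_def by (rule star_eqI[symmetric]) (use e f ids x l1 l2' in \<open>simp_all add: x_def\<close>)
  have "x \<cdot> x = (f \<cdot> x \<cdot> e) \<cdot> (f \<cdot> x \<cdot> e)" using fxe by simp
  also have "\<dots> = f \<cdot> x \<cdot> e" using l2' e f ids x by simp
  finally have "x \<in> E" using x fxe by (intro idemsI) auto
  then have "x\<^sup>\<star> = x" by simp
  moreover have "x\<^sup>\<star> = e \<cdot> f" using ef_arr by (simp add: x_def)
  ultimately show ?thesis using \<open>x \<in> E\<close> by simp
qed

lemma idem_commute:
  assumes e: "e \<in> E" and f: "f \<in> E" and ef: "dm e = dm f"
  shows "e \<cdot> f = f \<cdot> e"
proof -
  have ids: "e \<in> arr" "cd e = dm e" "e \<cdot> e = e" "f \<in> arr" "cd f = dm f" "f \<cdot> f = f" "dm e = dm f"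
    using idemsD[OF e] idemsD[OF f] ef by auto
  have fe: "f \<cdot> e \<in> E" "e \<cdot> f \<in> E" using idem_mul_closed e f ef by auto
  have "f \<cdot> e \<cdot> f \<cdot> e = f \<cdot> e" "e \<cdot> f \<cdot> e \<cdot> f = e \<cdot> f"
    using idemsD[OF fe(1)] idemsD[OF fe(2)] ids by simp_all
  then have "(f \<cdot> e)\<^sup>\<star> = e \<cdot> f" by (intro star_eqI) (use e f ids in simp_all)
  then show ?thesis using fe by simp
qed

lemma idem_commute_mul:
  assumes e: "e \<in> E" and f: "f \<in> E" and ef: "dm e = dm f" and x: "x \<in> arr" "cd x = dm e"
  shows "e \<cdot> f \<cdot> x = f \<cdot> e \<cdot> x"
  using arg_cong[where f="\<lambda>t. t \<cdot> x", OF idem_commute[OF e f ef]] idemsD[OF e] idemsD[OF f] ef x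
  by simp

lemma star_mul [simp]:
  assumes "s \<in> arr" "t \<in> arr" "dm s = cd t"
  shows "(s \<cdot> t)\<^sup>\<star> = t\<^sup>\<star> \<cdot> s\<^sup>\<star>"
proof -
  have comm: "t \<cdot> t\<^sup>\<star> \<cdot> s\<^sup>\<star> \<cdot> s \<cdot> x = s\<^sup>\<star> \<cdot> s \<cdot> t \<cdot> t\<^sup>\<star> \<cdot> x" if "x \<in> arr" "cd x = cd t" for x
    using idem_commute_mul[of "t \<cdot> t\<^sup>\<star>" "s\<^sup>\<star> \<cdot> s" x] mul_star_in_idems[of t] star_mul_in_idems[of s]
      assms that by simp
  have "s \<cdot> t \<cdot> t\<^sup>\<star> \<cdot> s\<^sup>\<star> \<cdot> s \<cdot> t = s \<cdot> t" using comm[of t] assms by simp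
  moreover have "t\<^sup>\<star> \<cdot> s\<^sup>\<star> \<cdot> s \<cdot> t \<cdot> t\<^sup>\<star> \<cdot> s\<^sup>\<star> = t\<^sup>\<star> \<cdot> s\<^sup>\<star>"
    using comm[of "s\<^sup>\<star>", symmetric] assms by simp
  ultimately show ?thesis by (intro star_eqI) (use assms in simp_all)
qed

lemma mul_star_idem_mul:
  assumes e: "e \<in> E" and s: "s \<in> arr" "dm e = cd s"
  shows "s \<cdot> s\<^sup>\<star> \<cdot> e \<cdot> s = e \<cdot> s"
proof -
  have e': "e \<in> arr" "cd e = cd s" using idemsD[OF e] s by auto
  have "(s \<cdot> s\<^sup>\<star>) \<cdot> e \<cdot> s = e \<cdot> (s \<cdot> s\<^sup>\<star>) \<cdot> s"
    by (rule idem_commute_mul) (simp_all add: mul_star_in_idems e e' s)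
  then show ?thesis using e' s by simp
qed

lemma star_idem_mul_in_idems:
  assumes e: "e \<in> E" and s: "s \<in> arr" "dm e = cd s"
  shows "s\<^sup>\<star> \<cdot> e \<cdot> s \<in> E"
proof -
  have e': "e \<in> arr" "cd e = cd s" using idemsD[OF e] s by auto
  have "(s\<^sup>\<star> \<cdot> e \<cdot> s) \<cdot> (s\<^sup>\<star> \<cdot> e \<cdot> s) = s\<^sup>\<star> \<cdot> e \<cdot> (s \<cdot> s\<^sup>\<star> \<cdot> e \<cdot> s)"
    using e' s by simp
  also have "\<dots> = s\<^sup>\<star> \<cdot> e \<cdot> e \<cdot> s" by (simp only: mul_star_idem_mul[OF e s])
  also have "\<dots> = s\<^sup>\<star> \<cdot> e \<cdot> s" using e e' s by simp
  finally show ?thesis using e' s by (intro idemsI) simp_all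
qed

lemma nleqE:
  assumes "nleq S r s"
  obtains e where "r \<in> arr" "s \<in> arr" "dm r = dm s" "cd r = cd s" "e \<in> E" "dm s = cd e" "r = s \<cdot> e"
  using assms by (auto simp: nleq_def)

lemma mul_idem_nleq: "s \<in> arr \<Longrightarrow> e \<in> E \<Longrightarrow> dm s = cd e \<Longrightarrow> nleq S (s \<cdot> e) s"
  using idemsD[of e] by (auto simp: nleq_def)

lemma nleq_refl: "s \<in> arr \<Longrightarrow> nleq S s s"
  using mul_idem_nleq[of s "s\<^sup>\<star> \<cdot> s"] star_mul_in_idems[of s] by simp

lemma idem_mul_nleq:
  assumes e: "e \<in> E" and s: "s \<in> arr" "dm e = cd s"
  shows "nleq S (e \<cdot> s) s"
proof -
  have e': "e \<in> arr" "cd e = cd s" using idemsD[OF e] s by auto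
  have "nleq S (s \<cdot> (s\<^sup>\<star> \<cdot> e \<cdot> s)) s"
    by (rule mul_idem_nleq[OF s(1) star_idem_mul_in_idems[OF e s]]) (simp add: s e')
  then show ?thesis using mul_star_idem_mul[OF e s] s e' by simp
qed

lemma nleq_trans:
  assumes "nleq S r s" "nleq S s t"
  shows "nleq S r t"
proof -
  obtain e where e: "e \<in> E" "dm s = cd e" "r = s \<cdot> e" and s: "s \<in> arr" "dm r = dm s"
    using assms(1) by (blast elim: nleqE)
  obtain f where f: "f \<in> E" "dm t = cd f" "s = t \<cdot> f" and t: "t \<in> arr" "dm s = dm t"
    using assms(2) by (blast elim: nleqE)
  have ids: "e \<in> arr" "dm e = cd e" "f \<in> arr" "dm f = cd f" using idemsD e f by auto
  have "f \<cdot> e \<in> E" by (rule idem_mul_closed[OF f(1) e(1)]) (use e f s t ids in simp)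
  then have "nleq S (t \<cdot> (f \<cdot> e)) t" by (rule mul_idem_nleq[OF t(1)]) (use e f s t ids in simp)
  moreover have "r = t \<cdot> (f \<cdot> e)" using e f s t ids by simp
  ultimately show ?thesis by simp
qed

lemma nleq_antisym:
  assumes "nleq S s t" "nleq S t s"
  shows "s = t"
proof -
  obtain e where e: "e \<in> E" "dm t = cd e" and s_eq: "s = t \<cdot> e" and t: "t \<in> arr"
    using assms(1) by (blast elim: nleqE)
  obtain f where f: "f \<in> E" "dm s = cd f" and t_eq: "t = s \<cdot> f" and s: "s \<in> arr" "dm t = dm s"
    using assms(2) by (blast elim: nleqE)
  have ids: "e \<in> arr" "dm e = cd e" "e \<cdot> e = e" "f \<in> arr" "dm f = cd f"
    using idemsD[OF e(1)] idemsD[OF f(1)] by auto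
  have fe: "f \<cdot> e = e \<cdot> f" by (rule idem_commute[OF f(1) e(1)]) (use e f s ids in simp)
  have "s \<cdot> e = (t \<cdot> e) \<cdot> e" using s_eq by simp
  also have "\<dots> = s" using s_eq ids t e by simp
  finally have se: "s \<cdot> e = s" .
  have "t \<cdot> e = (s \<cdot> f) \<cdot> e" using t_eq by simp
  also have "\<dots> = (s \<cdot> e) \<cdot> f" using fe ids s e f by simp
  also have "\<dots> = t" using se t_eq by simp
  finally show ?thesis using s_eq by simp
qed

lemma nleq_mul_right:
  assumes "nleq S r s" "u \<in> arr" "dm s = cd u"
  shows "nleq S (r \<cdot> u) (s \<cdot> u)"
proof -
  obtain e where e: "e \<in> E" "dm s = cd e" "r = s \<cdot> e" and s: "s \<in> arr"
    using assms(1) by (blast elim: nleqE)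
  have e': "e \<in> arr" "cd e = dm e" "dm e = cd u" using idemsD[OF e(1)] e assms by auto
  \<comment> \<open>move the idempotent across \<open>u\<close>: \<open>e u = u (u\<^sup>\<star> e u)\<close>\<close>
  have "r \<cdot> u = s \<cdot> u \<cdot> u\<^sup>\<star> \<cdot> e \<cdot> u"
    using mul_star_idem_mul[OF e(1) assms(2) e'(3)] e e' s assms by simp
  moreover have "nleq S ((s \<cdot> u) \<cdot> (u\<^sup>\<star> \<cdot> e \<cdot> u)) (s \<cdot> u)"
    by (rule mul_idem_nleq[OF _ star_idem_mul_in_idems[OF e(1) assms(2) e'(3)]])
      (use e e' s assms in simp_all)
  ultimately show ?thesis using e e' s assms by simp
qed

lemma nleq_mul_left:
  assumes "nleq S r s" "u \<in> arr" "dm u = cd s"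
  shows "nleq S (u \<cdot> r) (u \<cdot> s)"
proof -
  obtain e where e: "e \<in> E" "dm s = cd e" "r = s \<cdot> e" and s: "s \<in> arr"
    using assms(1) by (blast elim: nleqE)
  have e': "e \<in> arr" "cd e = dm e" using idemsD[OF e(1)] by auto
  have "nleq S ((u \<cdot> s) \<cdot> e) (u \<cdot> s)" by (rule mul_idem_nleq[OF _ e(1)]) (use e e' s assms in simp_all)
  then show ?thesis using e e' s assms by simp
qed

lemma nleq_star:
  assumes "nleq S r s"
  shows "nleq S r\<^sup>\<star> s\<^sup>\<star>"
proof -
  obtain e where e: "e \<in> E" "dm s = cd e" "r = s \<cdot> e" and s: "s \<in> arr"
    using assms by (blast elim: nleqE)
  have e': "e \<in> arr" "cd e = dm e" using idemsD[OF e(1)] by auto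
  have "nleq S (e \<cdot> s\<^sup>\<star>) s\<^sup>\<star>" by (rule idem_mul_nleq[OF e(1)]) (use e e' s in simp_all)
  then show ?thesis using e e' s by simp
qed

lemma idem_nleq_iff:
  assumes e: "e \<in> E" and f: "f \<in> E" and ef: "dm e = dm f"
  shows "nleq S e f \<longleftrightarrow> e \<cdot> f = e"
proof
  assume "nleq S e f"
  then obtain g where g: "g \<in> E" "dm f = cd g" "e = f \<cdot> g" by (blast elim: nleqE)
  have ids: "g \<in> arr" "dm g = cd g" "f \<in> arr" "dm f = cd f" "f \<cdot> f = f" using idemsD g f by auto
  have "e \<cdot> f = f \<cdot> g \<cdot> f" using g ids by simp
  also have "\<dots> = f \<cdot> f \<cdot> g" using idem_commute[OF g(1) f] g ids by simp
  also have "\<dots> = e" using idem_mul_idem_mul[OF f] g ids by simp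
  finally show "e \<cdot> f = e" .
next
  assume "e \<cdot> f = e"
  moreover have "nleq S (f \<cdot> e) f" by (rule mul_idem_nleq) (use idemsD e f ef in auto)
  ultimately show "nleq S e f" using idem_commute[OF f e] ef by simp
qed

lemma sigma_refl: "s \<in> arr \<Longrightarrow> sigma_rel S s s"
  unfolding sigma_rel_def using nleq_refl by blast

lemma sigma_sym: "sigma_rel S s t \<Longrightarrow> sigma_rel S t s"
  unfolding sigma_rel_def by blast

lemma sigma_relD: "sigma_rel S s t \<Longrightarrow> s \<in> arr \<and> t \<in> arr \<and> dm s = dm t \<and> cd s = cd t"
  unfolding sigma_rel_def nleq_def by auto

lemma nleq_imp_sigma: "nleq S r s \<Longrightarrow> sigma_rel S r s"
  unfolding sigma_rel_def by (blast elim: nleqE intro: nleq_refl)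

lemma sigma_trans:
  assumes "sigma_rel S s t" "sigma_rel S t u"
  shows "sigma_rel S s u"
proof -
  obtain r1 where r1: "nleq S r1 s" "nleq S r1 t" using assms(1) unfolding sigma_rel_def by blast
  obtain r2 where r2: "nleq S r2 t" "nleq S r2 u" using assms(2) unfolding sigma_rel_def by blast
  obtain e1 where e1: "e1 \<in> E" "dm t = cd e1" "r1 = t \<cdot> e1" and A1: "r1 \<in> arr" "t \<in> arr" "dm r1 = dm t"
    using r1(2) by (blast elim: nleqE)
  obtain e2 where e2: "e2 \<in> E" "dm t = cd e2" "r2 = t \<cdot> e2" and A2: "r2 \<in> arr" "dm r2 = dm t"
    using r2(1) by (blast elim: nleqE)
  have ids: "e1 \<in> arr" "dm e1 = cd e1" "e2 \<in> arr" "dm e2 = cd e2"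
    using idemsD[OF e1(1)] idemsD[OF e2(1)] by auto
  \<comment> \<open>\<open>t e\<^sub>1 e\<^sub>2\<close> is a common lower bound of \<open>r\<^sub>1\<close> and \<open>r\<^sub>2\<close>\<close>
  have "r1 \<cdot> e2 = t \<cdot> e1 \<cdot> e2" using e1 e2 A1 ids by simp
  also have "\<dots> = t \<cdot> e2 \<cdot> e1" using idem_commute[OF e1(1) e2(1)] e1 e2 ids by simp
  also have "\<dots> = r2 \<cdot> e1" using e1 e2 A1 ids by simp
  finally have r12: "r1 \<cdot> e2 = r2 \<cdot> e1" .
  have "nleq S (r1 \<cdot> e2) r1" by (rule mul_idem_nleq[OF _ e2(1)]) (use e1 e2 A1 ids in simp_all)
  moreover have "nleq S (r2 \<cdot> e1) r2" by (rule mul_idem_nleq[OF _ e1(1)]) (use e1 e2 A1 A2 ids in simp_all)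
  ultimately have "nleq S (r1 \<cdot> e2) s" "nleq S (r1 \<cdot> e2) u"
    using r1(1) r2(2) r12 nleq_trans by metis+
  then show ?thesis unfolding sigma_rel_def by blast
qed

lemma sigma_mul_right:
  assumes "sigma_rel S s t" "u \<in> arr" "dm s = cd u"
  shows "sigma_rel S (s \<cdot> u) (t \<cdot> u)"
proof -
  obtain r where "nleq S r s" "nleq S r t" using assms(1) unfolding sigma_rel_def by blast
  moreover have "dm t = cd u" using sigma_relD[OF assms(1)] assms by simp
  ultimately show ?thesis
    using nleq_mul_right assms unfolding sigma_rel_def by blast
qed

lemma sigma_mul_left:
  assumes "sigma_rel S s t" "u \<in> arr" "dm u = cd s"
  shows "sigma_rel S (u \<cdot> s) (u \<cdot> t)"
proof -
  obtain r where "nleq S r s" "nleq S r t" using assms(1) unfolding sigma_rel_def by blast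
  moreover have "dm u = cd t" using sigma_relD[OF assms(1)] assms by simp
  ultimately show ?thesis
    using nleq_mul_left assms unfolding sigma_rel_def by blast
qed

lemma sigma_star: "sigma_rel S s t \<Longrightarrow> sigma_rel S s\<^sup>\<star> t\<^sup>\<star>"
  unfolding sigma_rel_def using nleq_star by blast

abbreviation "\<pi> \<equiv> pi_sigma S"
abbreviation "G \<equiv> sigma_quot S"

lemma pi_sigma_self: "s \<in> arr \<Longrightarrow> s \<in> \<pi> s"
  unfolding pi_sigma_def using sigma_refl by auto

lemma mem_pi_sigmaD: "t \<in> \<pi> s \<Longrightarrow> t \<in> arr \<and> sigma_rel S s t"
  unfolding pi_sigma_def by auto

lemma pi_sigma_eq_iff:
  assumes "s \<in> arr" "t \<in> arr"
  shows "\<pi> s = \<pi> t \<longleftrightarrow> sigma_rel S s t"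
proof
  assume "\<pi> s = \<pi> t"
  then show "sigma_rel S s t" using pi_sigma_self[OF assms(2)] mem_pi_sigmaD by blast
next
  assume "sigma_rel S s t"
  then show "\<pi> s = \<pi> t" unfolding pi_sigma_def using sigma_trans sigma_sym by blast
qed

lemma rep_pi_sigma:
  assumes "s \<in> arr"
  shows "rep (\<pi> s) \<in> arr" "sigma_rel S s (rep (\<pi> s))"
proof -
  have "rep (\<pi> s) \<in> \<pi> s" unfolding rep_def using pi_sigma_self[OF assms] by (rule someI)
  then show "rep (\<pi> s) \<in> arr" "sigma_rel S s (rep (\<pi> s))" using mem_pi_sigmaD by auto
qed

lemma sigma_quot_arr: "sarr G = \<pi> ` arr"
  by (simp add: sigma_quot_def)

lemma sigma_quot_dom: "s \<in> arr \<Longrightarrow> sdom G (\<pi> s) = dm s"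
  and sigma_quot_cod: "s \<in> arr \<Longrightarrow> scod G (\<pi> s) = cd s"
  using rep_pi_sigma sigma_relD by (simp_all add: sigma_quot_def) metis+

lemma sigma_quot_mul:
  assumes "s \<in> arr" "t \<in> arr" "dm s = cd t"
  shows "smul G (\<pi> s) (\<pi> t) = \<pi> (s \<cdot> t)"
proof -
  let ?s = "rep (\<pi> s)" and ?t = "rep (\<pi> t)"
  have s': "?s \<in> arr" "sigma_rel S s ?s" and t': "?t \<in> arr" "sigma_rel S t ?t"
    using rep_pi_sigma assms by auto
  have dc: "dm ?s = dm s" "cd ?t = cd t" using sigma_relD[OF s'(2)] sigma_relD[OF t'(2)] by auto
  have "sigma_rel S (s \<cdot> t) (?s \<cdot> t)" by (rule sigma_mul_right[OF s'(2) assms(2,3)])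
  moreover have "sigma_rel S (?s \<cdot> t) (?s \<cdot> ?t)"
    by (rule sigma_mul_left[OF t'(2) s'(1)]) (use dc assms in simp)
  ultimately have "sigma_rel S (s \<cdot> t) (?s \<cdot> ?t)" by (rule sigma_trans)
  then have "\<pi> (?s \<cdot> ?t) = \<pi> (s \<cdot> t)"
    using pi_sigma_eq_iff s' t' dc assms by (metis mul_closed)
  then show ?thesis by (simp add: sigma_quot_def)
qed

lemma sigma_quot_star:
  assumes s: "s \<in> arr"
  shows "star G (\<pi> s) = \<pi> s\<^sup>\<star>"
  unfolding star_def[of G]
proof (rule the_equality)
  show "is_inv G (\<pi> s) (\<pi> s\<^sup>\<star>)"
    using s by (simp add: is_inv_def sigma_quot_arr sigma_quot_dom sigma_quot_cod sigma_quot_mul)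
next
  fix h assume h: "is_inv G (\<pi> s) h"
  then obtain t where t: "t \<in> arr" "h = \<pi> t" by (auto simp: is_inv_def sigma_quot_arr)
  have dc: "dm s = cd t" "dm t = cd s"
    using h s t by (auto simp: is_inv_def sigma_quot_dom sigma_quot_cod)
  have "\<pi> (s \<cdot> t \<cdot> s) = \<pi> s"
    using h s t dc by (simp add: is_inv_def sigma_quot_mul)
  then have "sigma_rel S (s \<cdot> t \<cdot> s) s" using s t dc pi_sigma_eq_iff by (metis mul_closed cod_mul)
  \<comment> \<open>conjugating by \<open>s\<^sup>\<star>\<close> gives an element below \<open>t\<close> that is \<open>\<sigma>\<close>-related to \<open>s\<^sup>\<star>\<close>\<close>
  then have "sigma_rel S (s\<^sup>\<star> \<cdot> (s \<cdot> t \<cdot> s)) (s\<^sup>\<star> \<cdot> s)"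
    by (rule sigma_mul_left) (use s t dc in simp_all)
  then have "sigma_rel S ((s\<^sup>\<star> \<cdot> (s \<cdot> t \<cdot> s)) \<cdot> s\<^sup>\<star>) ((s\<^sup>\<star> \<cdot> s) \<cdot> s\<^sup>\<star>)"
    by (rule sigma_mul_right) (use s t dc in simp_all)
  then have conj_sigma: "sigma_rel S (s\<^sup>\<star> \<cdot> s \<cdot> t \<cdot> s \<cdot> s\<^sup>\<star>) s\<^sup>\<star>" using s t dc by simp
  have "nleq S ((s\<^sup>\<star> \<cdot> s) \<cdot> (t \<cdot> s \<cdot> s\<^sup>\<star>)) (t \<cdot> s \<cdot> s\<^sup>\<star>)"
    by (rule idem_mul_nleq[OF star_mul_in_idems[OF s]]) (use s t dc in simp_all)
  moreover have "nleq S (t \<cdot> (s \<cdot> s\<^sup>\<star>)) t"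
    by (rule mul_idem_nleq[OF t(1) mul_star_in_idems[OF s]]) (use s t dc in simp_all)
  ultimately have "nleq S (s\<^sup>\<star> \<cdot> s \<cdot> t \<cdot> s \<cdot> s\<^sup>\<star>) t" using nleq_trans s t dc by fastforce
  then have "sigma_rel S t s\<^sup>\<star>" using conj_sigma nleq_imp_sigma sigma_sym sigma_trans by metis
  then show "h = \<pi> s\<^sup>\<star>" using t s pi_sigma_eq_iff by simp
qed

lemma mem_munn_X_star:
  "u \<in> arr \<Longrightarrow> y \<in> munn_X S u\<^sup>\<star> \<longleftrightarrow> y \<in> E \<and> nleq S y (u\<^sup>\<star> \<cdot> u)"
  by (simp add: munn_X_def)

lemma star_mul_mul_eq_idem:
  assumes u: "u \<in> arr" and y: "y \<in> E" "nleq S y (u\<^sup>\<star> \<cdot> u)"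
  shows "(u \<cdot> y)\<^sup>\<star> \<cdot> (u \<cdot> y) = y"
proof -
  have ids: "y \<in> arr" "dm y = dm u" "cd y = dm u" "y \<cdot> y = y"
    using idemsD[OF y(1)] y(2) u by (auto elim: nleqE)
  have "y \<cdot> u\<^sup>\<star> \<cdot> u = y"
    using idem_nleq_iff[OF y(1) star_mul_in_idems[OF u]] y u ids by simp
  then have "(y \<cdot> u\<^sup>\<star> \<cdot> u) \<cdot> y = y" using ids by simp
  then show ?thesis using u y ids by simp
qed

lemma munn_theta_eq_mul_star: "u \<in> arr \<Longrightarrow> y \<in> E \<Longrightarrow> dm u = cd y \<Longrightarrow> munn_theta S u y = (u \<cdot> y) \<cdot> (u \<cdot> y)\<^sup>\<star>"
  using idemsD[of y] by (simp add: munn_theta_def)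

end

locale E_unitary_sgpd = inverse_sgpd +
  assumes E_unitary: "E_unitary S"
begin

lemma sigma_mul_star_in_idems:
  assumes "sigma_rel S s t"
  shows "s \<cdot> t\<^sup>\<star> \<in> E"
proof -
  have st: "s \<in> arr" "t \<in> arr" "dm s = dm t" using sigma_relD[OF assms] by auto
  have "sigma_rel S (s \<cdot> t\<^sup>\<star>) (t \<cdot> t\<^sup>\<star>)" using sigma_mul_right[OF assms, of "t\<^sup>\<star>"] st by simp
  moreover have "s \<cdot> t\<^sup>\<star> \<in> arr" using st by simp
  ultimately show ?thesis using E_unitary mul_star_in_idems[OF st(2)] unfolding E_unitary_def by blast
qed

lemma sigma_star_mul_eq_imp_eq:
  assumes "sigma_rel S s t" "s\<^sup>\<star> \<cdot> s = t\<^sup>\<star> \<cdot> t"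
  shows "s = t"
proof -
  have below: "nleq S s t" if st: "sigma_rel S s t" "s\<^sup>\<star> \<cdot> s = t\<^sup>\<star> \<cdot> t" for s t
  proof -
    have p: "s \<in> arr" "t \<in> arr" "dm s = dm t" "cd s = cd t" using sigma_relD[OF st(1)] by auto
    have "s \<cdot> t\<^sup>\<star> \<cdot> t = s \<cdot> s\<^sup>\<star> \<cdot> s" using st(2) by simp
    then have "(s \<cdot> t\<^sup>\<star>) \<cdot> t = s" using p by simp
    moreover have "nleq S ((s \<cdot> t\<^sup>\<star>) \<cdot> t) t"
      by (rule idem_mul_nleq[OF sigma_mul_star_in_idems[OF st(1)]]) (use p in simp_all)
    ultimately show ?thesis by simp
  qed
  show ?thesis using below[OF assms] below[OF sigma_sym[OF assms(1)] assms(2)[symmetric]]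
    by (rule nleq_antisym)
qed

lemma ind_alpha_pi_sigma:
  assumes u: "u \<in> arr" and y: "y \<in> munn_X S u\<^sup>\<star>"
  shows "ind_alpha S (\<pi> u) y = munn_theta S u y"
proof -
  define w where "w = (SOME w. w \<in> \<pi> u \<and> y \<in> munn_X S w\<^sup>\<star>)"
  have "w \<in> \<pi> u \<and> y \<in> munn_X S w\<^sup>\<star>"
    unfolding w_def by (rule someI[of _ u]) (use pi_sigma_self[OF u] y in simp)
  then have w: "w \<in> arr" "sigma_rel S u w" "nleq S y (w\<^sup>\<star> \<cdot> w)" and y': "y \<in> E" "nleq S y (u\<^sup>\<star> \<cdot> u)"
    using mem_pi_sigmaD mem_munn_X_star u y by auto
  have dc: "dm w = dm u" "dm u = cd y" using sigma_relD[OF w(2)] y'(2) u by (auto elim: nleqE)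
  have "sigma_rel S (w \<cdot> y) (u \<cdot> y)"
    by (rule sigma_mul_right[OF sigma_sym[OF w(2)]]) (use y' idemsD dc in auto)
  moreover have "(w \<cdot> y)\<^sup>\<star> \<cdot> (w \<cdot> y) = (u \<cdot> y)\<^sup>\<star> \<cdot> (u \<cdot> y)"
    using star_mul_mul_eq_idem[OF w(1) y'(1) w(3)] star_mul_mul_eq_idem[OF u y'] by simp
  ultimately have "w \<cdot> y = u \<cdot> y" by (rule sigma_star_mul_eq_imp_eq)
  then have "munn_theta S w y = munn_theta S u y"
    using munn_theta_eq_mul_star w(1) u y'(1) dc by simp
  then show ?thesis unfolding ind_alpha_def w_def by simp
qed

abbreviation "T \<equiv> semidirect G (idem_sgpd S) (ind_D S) (ind_alpha S)"
abbreviation "\<phi> \<equiv> \<lambda>s. (\<pi> s, s\<^sup>\<star> \<cdot> s)"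

lemma ind_alpha_star_mul:
  assumes "s \<in> arr"
  shows "ind_alpha S (\<pi> s) (s\<^sup>\<star> \<cdot> s) = s \<cdot> s\<^sup>\<star>"
proof -
  have "s\<^sup>\<star> \<cdot> s \<in> munn_X S s\<^sup>\<star>"
    using assms star_mul_in_idems[OF assms] nleq_refl[of "s\<^sup>\<star> \<cdot> s"] by (simp add: mem_munn_X_star)
  then show ?thesis using assms by (simp add: ind_alpha_pi_sigma munn_theta_def)
qed

lemma phi_arr: "s \<in> arr \<Longrightarrow> \<phi> s \<in> sarr T"
  using pi_sigma_self[of "s\<^sup>\<star>"] star_mul_in_idems[of s] nleq_refl[of "s\<^sup>\<star> \<cdot> s"]
  by (force simp: semidirect_arr sigma_quot_arr sigma_quot_star ind_D_def mem_munn_X_star)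

lemma phi_dom: "s \<in> arr \<Longrightarrow> sdom T (\<phi> s) = (dm s, dm s)"
  by (simp add: semidirect_dom sigma_quot_dom)

lemma phi_cod: "s \<in> arr \<Longrightarrow> scod T (\<phi> s) = (cd s, cd s)"
  by (simp add: semidirect_cod sigma_quot_cod ind_alpha_star_mul)

lemma phi_mul:
  assumes s: "s \<in> arr" and t: "t \<in> arr" and st: "dm s = cd t"
  shows "smul T (\<phi> s) (\<phi> t) = \<phi> (s \<cdot> t)"
proof -
  have "s\<^sup>\<star> \<cdot> s \<cdot> t \<cdot> t\<^sup>\<star> \<in> E"
    using idem_mul_closed[OF star_mul_in_idems[OF s] mul_star_in_idems[OF t]] s t st by simp
  moreover have "nleq S (s\<^sup>\<star> \<cdot> s \<cdot> t \<cdot> t\<^sup>\<star>) (t \<cdot> t\<^sup>\<star>)"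
    using idem_mul_nleq[OF star_mul_in_idems[OF s], of "t \<cdot> t\<^sup>\<star>"] s t st by simp
  ultimately have "s\<^sup>\<star> \<cdot> s \<cdot> t \<cdot> t\<^sup>\<star> \<in> munn_X S t"
    by (simp add: munn_X_def)
  then have "ind_alpha S (\<pi> t\<^sup>\<star>) (s\<^sup>\<star> \<cdot> s \<cdot> t \<cdot> t\<^sup>\<star>) = t\<^sup>\<star> \<cdot> s\<^sup>\<star> \<cdot> s \<cdot> t"
    using s t st by (simp add: ind_alpha_pi_sigma munn_theta_def)
  then show ?thesis
    using s t st by (simp add: semidirect_mul sigma_quot_mul sigma_quot_star ind_alpha_star_mul)
qed

lemma sgpd_morphism_phi: "sgpd_morphism S T \<phi>"
  unfolding sgpd_morphism_def composable_def
  using phi_arr phi_dom phi_cod phi_mul by simp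

lemma inj_on_phi: "inj_on \<phi> arr"
  by (rule inj_onI) (use pi_sigma_eq_iff sigma_star_mul_eq_imp_eq in auto)

lemma phi_surj:
  assumes "p \<in> sarr T"
  obtains t where "t \<in> arr" "p = \<phi> t"
proof -
  obtain s y where p: "p = (\<pi> s, y)" and s: "s \<in> arr" and "y \<in> ind_D S (\<pi> s\<^sup>\<star>)"
    using assms by (cases p) (auto simp: semidirect_arr sigma_quot_arr sigma_quot_star)
  then obtain u where u: "u \<in> arr" "sigma_rel S s\<^sup>\<star> u" and "y \<in> munn_X S u\<^sup>\<star>\<^sup>\<star>"
    by (auto simp: ind_D_def dest: mem_pi_sigmaD)
  then have y: "y \<in> E" "nleq S y (u\<^sup>\<star>\<^sup>\<star> \<cdot> u\<^sup>\<star>)" using mem_munn_X_star[of "u\<^sup>\<star>"] by auto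
  \<comment> \<open>the preimage is \<open>u\<^sup>\<star> y\<close>, which lies below \<open>u\<^sup>\<star>\<close> and hence in the class of \<open>s\<close>\<close>
  define t where "t = u\<^sup>\<star> \<cdot> y"
  have dy: "dm (u\<^sup>\<star>) = cd y" using y u by (auto elim: nleqE)
  have t_arr: "t \<in> arr" using u y dy idemsD by (simp add: t_def)
  have "t\<^sup>\<star> \<cdot> t = y" unfolding t_def by (rule star_mul_mul_eq_idem) (use u y in simp_all)
  moreover have "sigma_rel S t u\<^sup>\<star>"
    unfolding t_def by (rule nleq_imp_sigma, rule mul_idem_nleq) (use u y dy in simp_all)
  then have "\<pi> t = \<pi> s"
    using sigma_star[OF u(2)] s u t_arr pi_sigma_eq_iff sigma_sym sigma_trans by (metis star_star)
  ultimately show ?thesis using that t_arr p by auto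
qed

lemma bij_betw_phi: "bij_betw \<phi> arr (sarr T)"
  unfolding bij_betw_def using inj_on_phi phi_arr phi_surj by blast

end

theorem mainTheorem14:
  fixes S :: "('a, 'o) sgpd"
  assumes "inverse_semigroupoid S"
    and "E_unitary S"
  shows "sgpd_iso S
           (semidirect (sigma_quot S) (idem_sgpd S) (ind_D S) (ind_alpha S))
           (\<lambda>s. (pi_sigma S s, smul S (star S s) s))"
proof -
  interpret E_unitary_sgpd S using assms by unfold_locales
  show ?thesis
  proof (rule sgpd_isoI[OF semigroupoid sgpd_morphism_phi bij_betw_phi])
    fix s t assume "s \<in> arr" "t \<in> arr" "composable T (\<phi> s) (\<phi> t)"
    then show "composable S s t" by (simp add: composable_def phi_dom phi_cod)
  qed
qed

end
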